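(* Let $G$ be a complete split graph with partition $(K,S)$, $K\neq\emptyset$, whose vertices are each colored $A$, $B$ or $C$. If every vertex of $K$ has color $A$ (resp. $B$), then the Normal Partizan Domination game on $G$ has the same value as the game on the star whose leaves are the vertices of $S$ (with their colors) and whose center has color $A$ (resp. $B$). Otherwise, the game on $G$ has the same value as the game on that star with center colored $C$.
   Context: A complete split graph is a graph $G$ whose vertex set has a partition $(K,S)$ such that $K$ induces a clique, $S$ is an independent set, and every vertex of $K$ is adjacent to every vertex of $S$. Normal Partizan Domination game: a finite graph has each vertex colored $A$, $B$ or $C$. Alice and Bob alternately select a vertex; Alice may only select vertices colored $A$ or $C$, Bob only vertices colored $B$ or $C$. A vertex $u$ dominates $v$ if $u=v$ or $uv$ is an edge. A vertex may be selected only if it is playable, i.e. it dominates at least one vertex not dominated by the previously selected vertices; the game ends when the selected vertices form a dominating set. Under normal play the player unable to move loses. The game is regarded as a partizan combinatorial game with Alice as Left and Bob as Right, and its value is its value in Conway's combinatorial game theory ($G=H$ iff $G+(-H)$ is a second-player win). *)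

theory Defs
  imports Main
begin

text \<open>A game is given by a left-move relation L and a right-move relation R on positions
  (L p q: q is a Left option of p).  lwins_first: Left wins when Left moves first;
  lwins_second: Left wins when Right moves first.  Normal play: a player unable to move loses.\<close>

inductive lwins_first :: "('p \<Rightarrow> 'p \<Rightarrow> bool) \<Rightarrow> ('p \<Rightarrow> 'p \<Rightarrow> bool) \<Rightarrow> 'p \<Rightarrow> bool"
  and lwins_second :: "('p \<Rightarrow> 'p \<Rightarrow> bool) \<Rightarrow> ('p \<Rightarrow> 'p \<Rightarrow> bool) \<Rightarrow> 'p \<Rightarrow> bool"
  for L R where
  "L p q \<Longrightarrow> lwins_second L R q \<Longrightarrow> lwins_first L R p"
| "(\<forall>q. R p q \<longrightarrow> lwins_first L R q) \<Longrightarrow> lwins_second L R p"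

text \<open>Second-player win: Left wins when Right starts and Right wins when Left starts
  (the latter is the former with the roles of the players swapped).\<close>
definition second_player_win :: "('p \<Rightarrow> 'p \<Rightarrow> bool) \<Rightarrow> ('p \<Rightarrow> 'p \<Rightarrow> bool) \<Rightarrow> 'p \<Rightarrow> bool" where
  "second_player_win L R p \<longleftrightarrow> lwins_second L R p \<and> lwins_second R L p"

text \<open>Disjunctive sum G + (-H): Left moves as Left in G or as Right in H, and vice versa.\<close>
definition sum_neg_L :: "('p \<Rightarrow> 'p \<Rightarrow> bool) \<Rightarrow> ('p \<Rightarrow> 'p \<Rightarrow> bool) \<Rightarrow>
    ('q \<Rightarrow> 'q \<Rightarrow> bool) \<Rightarrow> ('q \<Rightarrow> 'q \<Rightarrow> bool) \<Rightarrow> 'p \<times> 'q \<Rightarrow> 'p \<times> 'q \<Rightarrow> bool" where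
  "sum_neg_L LG RG LH RH x y \<longleftrightarrow>
     (LG (fst x) (fst y) \<and> snd y = snd x) \<or> (fst y = fst x \<and> RH (snd x) (snd y))"

definition sum_neg_R :: "('p \<Rightarrow> 'p \<Rightarrow> bool) \<Rightarrow> ('p \<Rightarrow> 'p \<Rightarrow> bool) \<Rightarrow>
    ('q \<Rightarrow> 'q \<Rightarrow> bool) \<Rightarrow> ('q \<Rightarrow> 'q \<Rightarrow> bool) \<Rightarrow> 'p \<times> 'q \<Rightarrow> 'p \<times> 'q \<Rightarrow> bool" where
  "sum_neg_R LG RG LH RH x y \<longleftrightarrow>
     (RG (fst x) (fst y) \<and> snd y = snd x) \<or> (fst y = fst x \<and> LH (snd x) (snd y))"

text \<open>Conway equality of the games rooted at g and h: G + (-H) is a second-player win.\<close>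
definition game_eq :: "('p \<Rightarrow> 'p \<Rightarrow> bool) \<Rightarrow> ('p \<Rightarrow> 'p \<Rightarrow> bool) \<Rightarrow> 'p \<Rightarrow>
    ('q \<Rightarrow> 'q \<Rightarrow> bool) \<Rightarrow> ('q \<Rightarrow> 'q \<Rightarrow> bool) \<Rightarrow> 'q \<Rightarrow> bool" where
  "game_eq LG RG g LH RH h \<longleftrightarrow>
     second_player_win (sum_neg_L LG RG LH RH) (sum_neg_R LG RG LH RH) (g, h)"

datatype colour = A | B | C

definition simple_graph :: "'v set \<Rightarrow> ('v \<Rightarrow> 'v \<Rightarrow> bool) \<Rightarrow> bool" where
  "simple_graph V E \<longleftrightarrow> finite V \<and> (\<forall>x y. E x y \<longrightarrow> x \<in> V \<and> y \<in> V \<and> x \<noteq> y \<and> E y x)"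

definition dominates :: "('v \<Rightarrow> 'v \<Rightarrow> bool) \<Rightarrow> 'v \<Rightarrow> 'v \<Rightarrow> bool" where
  "dominates E u w \<longleftrightarrow> u = w \<or> E u w"

definition playable :: "'v set \<Rightarrow> ('v \<Rightarrow> 'v \<Rightarrow> bool) \<Rightarrow> 'v set \<Rightarrow> 'v \<Rightarrow> bool" where
  "playable V E P v \<longleftrightarrow> v \<in> V \<and> (\<exists>w\<in>V. dominates E v w \<and> \<not> (\<exists>u\<in>P. dominates E u w))"

text \<open>Positions are the sets of selected vertices; the game starts at the empty set.\<close>
definition dom_L :: "'v set \<Rightarrow> ('v \<Rightarrow> 'v \<Rightarrow> bool) \<Rightarrow> ('v \<Rightarrow> colour) \<Rightarrow> 'v set \<Rightarrow> 'v set \<Rightarrow> bool" where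
  "dom_L V E col P P' \<longleftrightarrow> (\<exists>v. col v \<in> {A, C} \<and> playable V E P v \<and> P' = insert v P)"

definition dom_R :: "'v set \<Rightarrow> ('v \<Rightarrow> 'v \<Rightarrow> bool) \<Rightarrow> ('v \<Rightarrow> colour) \<Rightarrow> 'v set \<Rightarrow> 'v set \<Rightarrow> bool" where
  "dom_R V E col P P' \<longleftrightarrow> (\<exists>v. col v \<in> {B, C} \<and> playable V E P v \<and> P' = insert v P)"

definition dom_game_eq :: "'v set \<Rightarrow> ('v \<Rightarrow> 'v \<Rightarrow> bool) \<Rightarrow> ('v \<Rightarrow> colour) \<Rightarrow>
    'w set \<Rightarrow> ('w \<Rightarrow> 'w \<Rightarrow> bool) \<Rightarrow> ('w \<Rightarrow> colour) \<Rightarrow> bool" where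
  "dom_game_eq V1 E1 c1 V2 E2 c2 \<longleftrightarrow>
     game_eq (dom_L V1 E1 c1) (dom_R V1 E1 c1) {} (dom_L V2 E2 c2) (dom_R V2 E2 c2) {}"

definition complete_split_graph :: "'v set \<Rightarrow> ('v \<Rightarrow> 'v \<Rightarrow> bool) \<Rightarrow> 'v set \<Rightarrow> 'v set \<Rightarrow> bool" where
  "complete_split_graph V E K S \<longleftrightarrow> simple_graph V E \<and> V = K \<union> S \<and> K \<inter> S = {} \<and>
     (\<forall>x\<in>K. \<forall>y\<in>K. x \<noteq> y \<longrightarrow> E x y) \<and>
     (\<forall>x\<in>S. \<forall>y\<in>S. \<not> E x y) \<and>
     (\<forall>x\<in>K. \<forall>y\<in>S. E x y)"

text \<open>The star with leaves S (vertices Some s) and centre None.\<close>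
definition star_V :: "'v set \<Rightarrow> 'v option set" where
  "star_V S = insert None (Some ` S)"

definition star_E :: "'v set \<Rightarrow> 'v option \<Rightarrow> 'v option \<Rightarrow> bool" where
  "star_E S x y \<longleftrightarrow> x \<in> star_V S \<and> y \<in> star_V S \<and> ((x = None) \<noteq> (y = None))"

definition star_col :: "colour \<Rightarrow> ('v \<Rightarrow> colour) \<Rightarrow> 'v option \<Rightarrow> colour" where
  "star_col c col x = (case x of None \<Rightarrow> c | Some s \<Rightarrow> col s)"

end

theory Submission
  imports Defs
begin

text \<open>In a complete split graph every clique vertex dominates the whole graph, so the game
  ends as soon as one is selected, and before that only the selected independent vertices
  matter: a clique vertex is playable iff nothing is selected yet or some vertex of S is
  unselected. Hence positions of two complete split graphs correspond as long as their
  coloured independent sets agree and the same players own a clique vertex; this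
  correspondence is a bisimulation of the two games, and a bisimulation yields equal values
  because the second player can mirror in the difference game. The star is the complete
  split graph whose clique is its centre.\<close>

lemma lwins_second_sum_neg_by_mirroring:
  assumes wf: "wf {(p', p). LG p p' \<or> RG p p'}"
    and left_reply: "\<And>p q q'. Rel p q \<Longrightarrow> LH q q' \<Longrightarrow> \<exists>p'. LG p p' \<and> Rel p' q'"
    and right_reply: "\<And>p q p'. Rel p q \<Longrightarrow> RG p p' \<Longrightarrow> \<exists>q'. RH q q' \<and> Rel p' q'"
    and "Rel p q"
  shows "lwins_second (sum_neg_L LG RG LH RH) (sum_neg_R LG RG LH RH) (p, q)"
  using \<open>Rel p q\<close>
  \<comment> \<open>Left answers every Right move in one component by the related move in the other.\<close>
proof (induction p arbitrary: q rule: wf_induct[OF wf])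
  case (1 p q)
  let ?L = "sum_neg_L LG RG LH RH" and ?R = "sum_neg_R LG RG LH RH"
  have "lwins_first ?L ?R y" if "?R (p, q) y" for y
  proof -
    from that consider (G) p' where "RG p p'" "y = (p', q)" | (H) q' where "LH q q'" "y = (p, q')"
      unfolding sum_neg_R_def by (cases y) auto
    then show ?thesis
    proof cases
      case (G p')
      with right_reply[OF "1.prems"] obtain q' where "RH q q'" "Rel p' q'" by blast
      moreover have "lwins_second ?L ?R (p', q')" using "1.IH" G(1) \<open>Rel p' q'\<close> by blast
      ultimately show ?thesis
        using G(2) lwins_first_lwins_second.intros(1)[of ?L "(p', q)" "(p', q')"]
        by (simp add: sum_neg_L_def)
    next
      case (H q')
      with left_reply[OF "1.prems"] obtain p' where "LG p p'" "Rel p' q'" by blast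
      moreover have "lwins_second ?L ?R (p', q')" using "1.IH" \<open>LG p p'\<close> \<open>Rel p' q'\<close> by blast
      ultimately show ?thesis
        using H(2) lwins_first_lwins_second.intros(1)[of ?L "(p, q')" "(p', q')"]
        by (simp add: sum_neg_L_def)
    qed
  qed
  then show ?case by (blast intro: lwins_first_lwins_second.intros(2))
qed

lemma game_eq_if_bisimulation:
  assumes wf: "wf {(p', p). LG p p' \<or> RG p p'}"
    and "\<And>p q p'. Rel p q \<Longrightarrow> LG p p' \<Longrightarrow> \<exists>q'. LH q q' \<and> Rel p' q'"
    and "\<And>p q q'. Rel p q \<Longrightarrow> LH q q' \<Longrightarrow> \<exists>p'. LG p p' \<and> Rel p' q'"
    and "\<And>p q p'. Rel p q \<Longrightarrow> RG p p' \<Longrightarrow> \<exists>q'. RH q q' \<and> Rel p' q'"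
    and "\<And>p q q'. Rel p q \<Longrightarrow> RH q q' \<Longrightarrow> \<exists>p'. RG p p' \<and> Rel p' q'"
    and "Rel g h"
  shows "game_eq LG RG g LH RH h"
proof -
  have wf': "wf {(p', p). RG p p' \<or> LG p p'}" using wf by (simp add: disj_commute)
  have "sum_neg_L RG LG RH LH = sum_neg_R LG RG LH RH" "sum_neg_R RG LG RH LH = sum_neg_L LG RG LH RH"
    by (auto simp: fun_eq_iff sum_neg_L_def sum_neg_R_def)
  then show ?thesis
    unfolding game_eq_def second_player_win_def
    using lwins_second_sum_neg_by_mirroring[of LG RG, OF wf, of Rel]
      lwins_second_sum_neg_by_mirroring[of RG LG, OF wf', of Rel] assms(2-6)
    by metis
qed

lemma complete_split_graph_dominates_iff:
  assumes "complete_split_graph V E K S" and "u \<in> V" and "w \<in> V"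
  shows "dominates E u w \<longleftrightarrow> u = w \<or> u \<in> K \<or> w \<in> K"
  using assms unfolding complete_split_graph_def simple_graph_def dominates_def by blast

lemma complete_split_graph_playable_iff:
  assumes G: "complete_split_graph V E K S" and "P \<subseteq> V"
  shows "playable V E P v \<longleftrightarrow>
    P \<inter> K = {} \<and> (v \<in> K \<and> (P = {} \<or> \<not> S \<subseteq> P) \<or> v \<in> S \<and> v \<notin> P)"
proof -
  have split: "V = K \<union> S" "K \<inter> S = {}" using G unfolding complete_split_graph_def by auto
  have "playable V E P v \<longleftrightarrow> v \<in> V \<and> (\<exists>w\<in>V. (v = w \<or> v \<in> K \<or> w \<in> K) \<and>
      \<not> (\<exists>u\<in>P. u = w \<or> u \<in> K \<or> w \<in> K))"
    unfolding playable_def using complete_split_graph_dominates_iff[OF G] assms(2) by blast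
  also have "\<dots> \<longleftrightarrow> P \<inter> K = {} \<and> (v \<in> K \<and> (P = {} \<or> \<not> S \<subseteq> P) \<or> v \<in> S \<and> v \<notin> P)"
    using split assms(2) by blast
  finally show ?thesis .
qed

lemma complete_split_graph_star:
  assumes "finite S"
  shows "complete_split_graph (star_V S) (star_E S) {None} (Some ` S)"
  using assms unfolding complete_split_graph_def simple_graph_def star_V_def star_E_def by auto

definition dom_move :: "'v set \<Rightarrow> ('v \<Rightarrow> 'v \<Rightarrow> bool) \<Rightarrow> ('v \<Rightarrow> colour) \<Rightarrow> colour set \<Rightarrow>
    'v set \<Rightarrow> 'v set \<Rightarrow> bool" where
  "dom_move V E col D P P' \<longleftrightarrow> (\<exists>v. col v \<in> D \<and> playable V E P v \<and> P' = insert v P)"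

lemma dom_L_eq_dom_move: "dom_L V E col = dom_move V E col {A, C}"
  by (simp add: fun_eq_iff dom_L_def dom_move_def)

lemma dom_R_eq_dom_move: "dom_R V E col = dom_move V E col {B, C}"
  by (simp add: fun_eq_iff dom_R_def dom_move_def)

lemma playable_imp_unselected: "playable V E P v \<Longrightarrow> v \<in> V - P"
  unfolding playable_def dominates_def by blast

lemma wf_dom_moves:
  assumes "finite V"
  shows "wf {(P', P). dom_move V E col D1 P P' \<or> dom_move V E col D2 P P'}"
proof (rule wf_subset[OF wf_measure[of "\<lambda>P. card (V - P)"]])
  have "card (V - insert v P) < card (V - P)" if "v \<in> V - P" for v P
    using that assms by (metis Diff_insert card_Diff1_less finite_Diff)
  then show "{(P', P). dom_move V E col D1 P P' \<or> dom_move V E col D2 P P'}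
      \<subseteq> measure (\<lambda>P. card (V - P))"
    unfolding dom_move_def by (auto dest: playable_imp_unselected)
qed

definition split_positions_match :: "'v set \<Rightarrow> 'v set \<Rightarrow> 'w set \<Rightarrow> 'w set \<Rightarrow> ('v \<Rightarrow> 'w) \<Rightarrow>
    'v set \<Rightarrow> 'w set \<Rightarrow> bool" where
  "split_positions_match K S K' S' f P Q \<longleftrightarrow> P \<subseteq> K \<union> S \<and> Q \<subseteq> K' \<union> S' \<and>
     (P \<inter> K = {} \<longleftrightarrow> Q \<inter> K' = {}) \<and> f ` (P \<inter> S) = Q \<inter> S'"

lemma split_positions_match_swap:
  assumes "bij_betw f S S'"
  shows "split_positions_match K' S' K S (inv_into S f) Q P \<longleftrightarrow> split_positions_match K S K' S' f P Q"
proof -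
  have "inv_into S f ` (Q \<inter> S') = P \<inter> S \<longleftrightarrow> f ` (P \<inter> S) = Q \<inter> S'"
  proof
    assume "inv_into S f ` (Q \<inter> S') = P \<inter> S"
    then have "f ` (P \<inter> S) = f ` inv_into S f ` (Q \<inter> S')" by simp
    also have "\<dots> = Q \<inter> S'"
      using image_inv_into_cancel[OF bij_betw_imp_surj_on[OF assms]] by blast
    finally show "f ` (P \<inter> S) = Q \<inter> S'" .
  next
    assume "f ` (P \<inter> S) = Q \<inter> S'"
    then show "inv_into S f ` (Q \<inter> S') = P \<inter> S"
      using assms by (metis bij_betw_def inf_le2 inv_into_image_cancel)
  qed
  then show ?thesis unfolding split_positions_match_def by argo
qed

lemma split_positions_match_before_clique:
  assumes f: "bij_betw f S S'" and match: "split_positions_match K S K' S' f P Q"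
    and P_free: "P \<inter> K = {}"
  shows "Q \<inter> K' = {}" and "P \<subseteq> S" and "Q = f ` P"
    and "S' \<subseteq> Q \<longleftrightarrow> S \<subseteq> P" and "\<And>s. s \<in> S \<Longrightarrow> f s \<in> Q \<longleftrightarrow> s \<in> P"
proof -
  show "Q \<inter> K' = {}" and P_S: "P \<subseteq> S"
    using match P_free unfolding split_positions_match_def by blast+
  then have "Q \<subseteq> S'" using match unfolding split_positions_match_def by blast
  with P_S show Q_img: "Q = f ` P"
    using match unfolding split_positions_match_def by (simp add: Int_absorb2)
  have inj: "inj_on f S" and S'_img: "S' = f ` S" using f by (auto simp: bij_betw_def)
  show mem: "f s \<in> Q \<longleftrightarrow> s \<in> P" if "s \<in> S" for s
    using inj_on_image_mem_iff[OF inj that P_S] Q_img by simp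
  show "S' \<subseteq> Q \<longleftrightarrow> S \<subseteq> P"
    unfolding S'_img image_subset_iff using mem by blast
qed

lemma complete_split_graph_dom_move_simulation:
  assumes G: "complete_split_graph V E K S" and G': "complete_split_graph V' E' K' S'"
    and f: "bij_betw f S S'" "\<And>s. s \<in> S \<Longrightarrow> col' (f s) = col s"
    and K_colour: "(\<exists>k\<in>K. col k \<in> D) \<Longrightarrow> (\<exists>k\<in>K'. col' k \<in> D)"
    and match: "split_positions_match K S K' S' f P Q"
    and move: "dom_move V E col D P P'"
  shows "\<exists>Q'. dom_move V' E' col' D Q Q' \<and> split_positions_match K S K' S' f P' Q'"
proof -
  have split: "V = K \<union> S" "K \<inter> S = {}" using G unfolding complete_split_graph_def by auto
  have split': "V' = K' \<union> S'" "K' \<inter> S' = {}" using G' unfolding complete_split_graph_def by auto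
  obtain v where v: "col v \<in> D" "playable V E P v" and P': "P' = insert v P"
    using move unfolding dom_move_def by blast
  have PQ: "P \<subseteq> V" "Q \<subseteq> V'"
    using match split split' unfolding split_positions_match_def by auto
  have P_free: "P \<inter> K = {}" and v_cases: "v \<in> K \<and> (P = {} \<or> \<not> S \<subseteq> P) \<or> v \<in> S \<and> v \<notin> P"
    using v(2) complete_split_graph_playable_iff[OF G PQ(1)] by auto
  note before = split_positions_match_before_clique[OF f(1) match P_free]
  from v_cases show ?thesis
  proof
    assume vK: "v \<in> K \<and> (P = {} \<or> \<not> S \<subseteq> P)"
    then obtain k where k: "k \<in> K'" "col' k \<in> D" using K_colour v(1) by blast
    have "Q = {} \<or> \<not> S' \<subseteq> Q"
      using vK before(3,4) by blast
    then have "playable V' E' Q k"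
      using k before(1) by (simp add: complete_split_graph_playable_iff[OF G' PQ(2)])
    then have "dom_move V' E' col' D Q (insert k Q)" using k unfolding dom_move_def by blast
    moreover have "split_positions_match K S K' S' f P' (insert k Q)"
    proof -
      have "insert v P \<inter> S = P \<inter> S" "insert k Q \<inter> S' = Q \<inter> S'"
        using vK k split(2) split'(2) by blast+
      then show ?thesis
        using match vK k unfolding split_positions_match_def P' by auto
    qed
    ultimately show ?thesis by blast
  next
    assume vS: "v \<in> S \<and> v \<notin> P"
    then have "f v \<in> S'" "f v \<notin> Q"
      using before(5) f(1) by (auto simp: bij_betwE)
    then have "playable V' E' Q (f v)"
      using before(1) by (simp add: complete_split_graph_playable_iff[OF G' PQ(2)])
    then have "dom_move V' E' col' D Q (insert (f v) Q)"
      using f(2) vS v(1) unfolding dom_move_def by (intro exI[of _ "f v"]) auto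
    moreover have "split_positions_match K S K' S' f P' (insert (f v) Q)"
    proof -
      have "insert v P \<inter> K = P \<inter> K" "insert (f v) Q \<inter> K' = Q \<inter> K'"
        using vS \<open>f v \<in> S'\<close> split(2) split'(2) by blast+
      then show ?thesis
        using match vS \<open>f v \<in> S'\<close> unfolding split_positions_match_def P' by auto
    qed
    ultimately show ?thesis by blast
  qed
qed

theorem dom_game_eq_complete_split_graphs:
  assumes G: "complete_split_graph V E K S" and G': "complete_split_graph V' E' K' S'"
    and f: "bij_betw f S S'" "\<And>s. s \<in> S \<Longrightarrow> col' (f s) = col s"
    and left_K: "(\<exists>k\<in>K. col k \<in> {A, C}) \<longleftrightarrow> (\<exists>k\<in>K'. col' k \<in> {A, C})"
    and right_K: "(\<exists>k\<in>K. col k \<in> {B, C}) \<longleftrightarrow> (\<exists>k\<in>K'. col' k \<in> {B, C})"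
  shows "dom_game_eq V E col V' E' col'"
proof -
  let ?match = "split_positions_match K S K' S' f"
  have f_inv: "bij_betw (inv_into S f) S' S" using f(1) by (rule bij_betw_inv_into)
  have col_inv: "col (inv_into S f s') = col' s'" if "s' \<in> S'" for s'
  proof -
    have "inv_into S f s' \<in> S" using bij_betwE[OF f_inv] that by blast
    then show ?thesis using f(2) bij_betw_inv_into_right[OF f(1) that] by metis
  qed
  have K_D: "(\<exists>k\<in>K. col k \<in> D) \<longleftrightarrow> (\<exists>k\<in>K'. col' k \<in> D)" if "D \<in> {{A, C}, {B, C}}" for D
    using that left_K right_K by blast
  have forward: "\<exists>Q'. dom_move V' E' col' D Q Q' \<and> ?match P' Q'"
    if "D \<in> {{A, C}, {B, C}}" "?match P Q" "dom_move V E col D P P'" for D P Q P'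
    using complete_split_graph_dom_move_simulation[OF G G' f K_D[OF that(1), THEN iffD1] that(2,3)] .
  have backward: "\<exists>P'. dom_move V E col D P P' \<and> ?match P' Q'"
    if "D \<in> {{A, C}, {B, C}}" "?match P Q" "dom_move V' E' col' D Q Q'" for D P Q Q'
    using complete_split_graph_dom_move_simulation[OF G' G f_inv col_inv K_D[OF that(1), THEN iffD2]
        split_positions_match_swap[OF f(1), THEN iffD2, OF that(2)] that(3)]
    by (simp add: split_positions_match_swap[OF f(1)])
  have "finite V" using G unfolding complete_split_graph_def simple_graph_def by blast
  then show ?thesis
    unfolding dom_game_eq_def dom_L_eq_dom_move dom_R_eq_dom_move
  proof (rule game_eq_if_bisimulation[where Rel = ?match, OF wf_dom_moves])
    show "?match {} {}" unfolding split_positions_match_def by simp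
  qed (metis forward backward insertCI)+
qed

theorem theorem10:
  fixes V K S :: "'v set" and E :: "'v \<Rightarrow> 'v \<Rightarrow> bool" and col :: "'v \<Rightarrow> colour"
  assumes "complete_split_graph V E K S" and "K \<noteq> {}"
  shows "((\<forall>k\<in>K. col k = A) \<longrightarrow> dom_game_eq V E col (star_V S) (star_E S) (star_col A col))
       \<and> ((\<forall>k\<in>K. col k = B) \<longrightarrow> dom_game_eq V E col (star_V S) (star_E S) (star_col B col))
       \<and> ((\<not> (\<forall>k\<in>K. col k = A) \<and> \<not> (\<forall>k\<in>K. col k = B)) \<longrightarrow>
            dom_game_eq V E col (star_V S) (star_E S) (star_col C col))"
proof -
  have "finite S" using assms(1) unfolding complete_split_graph_def simple_graph_def by auto
  then have star: "complete_split_graph (star_V S) (star_E S) {None} (Some ` S)"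
    by (rule complete_split_graph_star)
  have reduce: "dom_game_eq V E col (star_V S) (star_E S) (star_col c col)"
    if "c \<in> {A, C} \<longleftrightarrow> (\<exists>k\<in>K. col k \<in> {A, C})" "c \<in> {B, C} \<longleftrightarrow> (\<exists>k\<in>K. col k \<in> {B, C})" for c
    using dom_game_eq_complete_split_graphs[OF assms(1) star, of Some] that
    by (simp add: star_col_def inj_on_imp_bij_betw)
  have "\<exists>k\<in>K. col k \<in> {A, C}" "\<exists>k\<in>K. col k \<in> {B, C}"
    if "\<not> (\<forall>k\<in>K. col k = A)" "\<not> (\<forall>k\<in>K. col k = B)"
    using that colour.exhaust by (metis insertCI)+
  then show ?thesis using assms(2) by (auto intro!: reduce)
qed

end
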